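(* Let $S(x,y;t,v)=\sum_{w}x^{i(w)}y^{j(w)}t^{|w|}v^{\mathrm{vert}(w)}$, where the sum runs over all walks $w$ on the slit plane on the ordinary square lattice, $(i(w),j(w))$ is the endpoint, $|w|$ the length and $\mathrm{vert}(w)$ the number of vertical steps $(0,\pm1)$. Let $\delta_1=(1-2t(1+v))(1+2t(1-v))$ and $\delta_2=(1-2t(1-v))(1+2t(1+v))$. Then $$S(x,y;t,v)=\frac{\left(1-2t(v+\bar x)+\sqrt{\delta_1}\right)^{1/2}\left(1+2t(v-\bar x)+\sqrt{\delta_2}\right)^{1/2}}{2\left(1-t(x+\bar x+yv+\bar yv)\right)},$$ with radicals the power series in $t$ with positive constant term.
   Context: $\mathcal H=\{(k,0):k\le0\}$. A walk on the slit plane (ordinary square lattice) is a sequence $(w_0,\dots,w_n)$ in $\mathbb{Z}^2$ with $w_0=(0,0)$, $w_m-w_{m-1}\in\{(\pm1,0),(0,\pm1)\}$, and $w_m\notin\mathcal H$ for $1\le m\le n$. $\bar x=1/x$, $\bar y=1/y$. *)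

theory Defs
  imports Complex_Main "HOL-Computational_Algebra.Formal_Power_Series"
begin

definition sq_steps :: "(int \<times> int) set" where
  "sq_steps = {(1,0), (-1,0), (0,1), (0,-1)}"

definition slit :: "(int \<times> int) set" where
  "slit = {(k, 0) | k. k \<le> 0}"

definition walk_pos :: "(int \<times> int) list \<Rightarrow> nat \<Rightarrow> int \<times> int" where
  "walk_pos ws m = (sum_list (map fst (take m ws)), sum_list (map snd (take m ws)))"

definition slit_walk :: "(int \<times> int) list \<Rightarrow> bool" where
  "slit_walk ws \<longleftrightarrow> set ws \<subseteq> sq_steps \<and>
     (\<forall>m. 1 \<le> m \<and> m \<le> length ws \<longrightarrow> walk_pos ws m \<notin> slit)"

definition slit_walks :: "nat \<Rightarrow> (int \<times> int) list set" where
  "slit_walks n = {ws. length ws = n \<and> slit_walk ws}"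

definition vert :: "(int \<times> int) list \<Rightarrow> nat" where
  "vert ws = length (filter (\<lambda>s. fst s = 0) ws)"

definition S_gf :: "complex \<Rightarrow> complex \<Rightarrow> complex \<Rightarrow> complex fps" where
  "S_gf x y v = Abs_fps (\<lambda>n. \<Sum>ws\<in>slit_walks n.
      x powi fst (walk_pos ws n) * y powi snd (walk_pos ws n) * v ^ vert ws)"

text \<open>Square root of a power series, with constant term the principal square root
  (positive for positive real constant terms).\<close>
definition fps_sqrt :: "complex fps \<Rightarrow> complex fps" where
  "fps_sqrt a = fps_radical (\<lambda>_ z. csqrt z) 2 a"

end

(* Kernel method. The weighted number of slit walks of length n ending at (i, j) satisfies the
   free step recurrence off the slit and vanishes on the slit for n >= 1. Let
   C(z) = 1/2 sqrt(1 - 2t(v + z) + sqrt delta(v)) sqrt(1 - 2t(z - v) + sqrt delta(-v)); its t^n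
   coefficient is a polynomial of degree at most n in z. The coefficients of
   C(1/x) / (1 - t K(x, y)), K = x + 1/x + v (y + 1/y), satisfy the same free recurrence and
   initial condition. On the row j = 0 their generating function is C(1/x) D(x + 1/x), where
   D(u) = 1/sqrt((1 - u t)^2 - 4 v^2 t^2) counts free walks ending on the horizontal axis. The
   algebraic identity C(1/x) C(x) D(x + 1/x) = C(0) turns this into C(0) / C(x), whose t^n
   coefficient (n >= 1) is a polynomial in x without constant term, so these coefficients vanish
   on the slit as well and agree with the walk numbers by induction on n. *)

theory Submission
  imports Defs "HOL-Analysis.Poly_Roots" "HOL-Computational_Algebra.Polynomial"
begin

unbundle fps_syntax

section \<open>Laurent sums\<close>

lemma sum_eq_on_common_support:
  assumes "finite A" "finite B" "\<And>i. f i \<noteq> 0 \<Longrightarrow> i \<in> A \<inter> B"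
  shows "sum f A = sum f B"
proof -
  have "sum f A = sum f (A \<inter> B)"
    by (rule sum.mono_neutral_right) (use assms in auto)
  also have "\<dots> = sum f B"
    by (rule sum.mono_neutral_left) (use assms in auto)
  finally show ?thesis .
qed

lemma laurent_sum_shift:
  fixes c :: "int \<Rightarrow> complex"
  assumes supp: "\<And>i. c i \<noteq> 0 \<Longrightarrow> \<bar>i\<bar> \<le> M" and "M + \<bar>k\<bar> \<le> N" and "x \<noteq> 0"
  shows "(\<Sum>i\<in>{-N..N}. c (i + k) * x powi i) = x powi (-k) * (\<Sum>i\<in>{-M..M}. c i * x powi i)"
proof -
  have "(\<Sum>i\<in>{-N..N}. c (i + k) * x powi i) = (\<Sum>i\<in>{-N+k..N+k}. c i * x powi (i - k))"
    by (rule sum.reindex_bij_witness[of _ "\<lambda>i. i - k" "\<lambda>i. i + k"]) auto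
  also have "\<dots> = x powi (-k) * (\<Sum>i\<in>{-N+k..N+k}. c i * x powi i)"
    unfolding sum_distrib_left
    by (rule sum.cong) (use power_int_add[of x "-k"] \<open>x \<noteq> 0\<close> in \<open>auto simp: mult_ac\<close>)
  also have "(\<Sum>i\<in>{-N+k..N+k}. c i * x powi i) = (\<Sum>i\<in>{-M..M}. c i * x powi i)"
    by (rule sum_eq_on_common_support) (use assms in \<open>auto dest!: supp\<close>)
  finally show ?thesis .
qed

lemma laurent_coeffs_eq_0:
  fixes a :: "int \<Rightarrow> complex"
  assumes "\<And>x. x \<noteq> 0 \<Longrightarrow> (\<Sum>i\<in>{-int N..int N}. a i * x powi i) = 0"
    and "i \<in> {-int N..int N}"
  shows "a i = 0"
proof -
  define c where "c k = a (int k - int N)" for k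
  have "(\<Sum>k\<le>2*N. c k * x^k) = x^N * (\<Sum>i\<in>{-int N..int N}. a i * x powi i)" if "x \<noteq> 0" for x
  proof -
    have "(\<Sum>k\<le>2*N. c k * x^k) = (\<Sum>i\<in>{-int N..int N}. a i * x powi (i + int N))"
      unfolding c_def
      by (rule sum.reindex_bij_witness[of _ "\<lambda>i. nat (i + int N)" "\<lambda>k. int k - int N"])
         (auto simp: power_int_def)
    then show ?thesis
      by (simp add: sum_distrib_left power_int_add that mult_ac)
  qed
  then have "{z. z \<noteq> 0} \<subseteq> {z. (\<Sum>k\<le>2*N. c k * z^k) = 0}"
    using assms(1) by auto
  moreover have "infinite {z::complex. z \<noteq> 0}"
  proof
    assume "finite {z::complex. z \<noteq> 0}"
    then have "finite (insert 0 {z::complex. z \<noteq> 0})"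
      by simp
    moreover have "insert 0 {z::complex. z \<noteq> 0} = UNIV"
      by auto
    ultimately show False
      by (simp add: infinite_UNIV_char_0)
  qed
  ultimately have "infinite {z. (\<Sum>k\<le>2*N. c k * z^k) = 0}"
    using finite_subset by blast
  then have "\<forall>k\<le>2*N. c k = 0"
    using polyfun_finite_roots by blast
  then show ?thesis
    using assms(2) by (auto simp: c_def dest: spec[of _ "nat (i + int N)"])
qed

lemma laurent_sum_poly:
  fixes p :: "complex poly"
  assumes "degree p \<le> n"
  shows "(\<Sum>i\<in>{-int n..int n}. (if 0 \<le> i then coeff p (nat i) else 0) * x powi i) = poly p x"
proof -
  have "(\<Sum>i\<in>{-int n..int n}. (if 0 \<le> i then coeff p (nat i) else 0) * x powi i) =
      (\<Sum>i\<in>{0..int n}. (if 0 \<le> i then coeff p (nat i) else 0) * x powi i)"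
  proof (rule sum_eq_on_common_support)
    fix i
    assume "(if 0 \<le> i then coeff p (nat i) else 0) * x powi i \<noteq> 0"
    then have "0 \<le> i" "coeff p (nat i) \<noteq> 0"
      by (auto split: if_splits)
    then show "i \<in> {-int n..int n} \<inter> {0..int n}"
      using le_degree[of p "nat i"] assms by auto
  qed auto
  also have "\<dots> = (\<Sum>k\<le>n. coeff p k * x ^ k)"
    by (rule sum.reindex_bij_witness[of _ int nat]) (auto simp: power_int_def)
  also have "\<dots> = poly p x"
    unfolding poly_altdef
    by (rule sum_eq_on_common_support) (use assms in \<open>auto intro: le_degree\<close>)
  finally show ?thesis .
qed

section \<open>Walks without the slit\<close>

fun line_walks :: "nat \<Rightarrow> int \<Rightarrow> complex" where
  "line_walks 0 i = (if i = 0 then 1 else 0)"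
| "line_walks (Suc n) i = line_walks n (i - 1) + line_walks n (i + 1)"

lemma line_walks_eq_0: "\<bar>i\<bar> > int n \<Longrightarrow> line_walks n i = 0"
  by (induction n arbitrary: i) auto

lemma line_walks_laurent:
  assumes "x \<noteq> 0"
  shows "(\<Sum>i\<in>{-int n..int n}. line_walks n i * x powi i) = (x + 1/x) ^ n"
proof (induction n)
  case 0
  then show ?case by simp
next
  case (Suc n)
  have shift: "(\<Sum>i\<in>{-int (Suc n)..int (Suc n)}. line_walks n (i + k) * x powi i) =
      x powi (-k) * (x + 1/x) ^ n" if "\<bar>k\<bar> = 1" for k
    using laurent_sum_shift[of "line_walks n" "int n" k "int (Suc n)" x] line_walks_eq_0[of n]
      that assms Suc.IH by force
  have "(\<Sum>i\<in>{-int (Suc n)..int (Suc n)}. line_walks (Suc n) i * x powi i) =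
     (\<Sum>i\<in>{-int (Suc n)..int (Suc n)}. line_walks n (i + (-1)) * x powi i) +
     (\<Sum>i\<in>{-int (Suc n)..int (Suc n)}. line_walks n (i + 1) * x powi i)"
    by (simp add: sum.distrib algebra_simps)
  also have "\<dots> = (x + 1/x) ^ Suc n"
    using shift[of "-1"] shift[of 1] assms by (simp add: field_simps power_int_minus)
  finally show ?case .
qed

lemma line_walks_laurent_le:
  assumes "n \<le> N" "x \<noteq> 0"
  shows "(\<Sum>i\<in>{-int N..int N}. line_walks n i * x powi i) = (x + 1/x) ^ n"
  using sum_eq_on_common_support[of "{-int N..int N}" "{-int n..int n}" "\<lambda>i. line_walks n i * x powi i"]
    line_walks_eq_0[of n] line_walks_laurent[OF assms(2), of n] assms(1)
  by (force simp: not_less)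

lemma line_walks_closed_form:
  "line_walks n i = (if even (int n + i) \<and> \<bar>i\<bar> \<le> int n
                     then of_nat (n choose nat ((int n + i) div 2)) else 0)"
proof (induction n arbitrary: i)
  case 0
  then show ?case by auto
next
  case (Suc n)
  show ?case
  proof (cases "even (int n + 1 + i) \<and> \<bar>i\<bar> \<le> int n + 1")
    case False
    then show ?thesis using Suc by auto
  next
    case True
    then obtain k where "int n + 1 + i = 2 * k"
      by (meson evenE)
    then have k: "int n + 1 + i = 2 * k" "0 \<le> k" "k \<le> int n + 1"
      using True by auto
    have l: "int n + (i - 1) = 2 * (k - 1)" "\<bar>i - 1\<bar> \<le> int n \<longleftrightarrow> 1 \<le> k"
      using k by auto
    have left: "line_walks n (i - 1) = (if 1 \<le> k then of_nat (n choose nat (k - 1)) else 0)"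
      using Suc[of "i - 1"] unfolding l(1) by (simp add: l(2))
    have r: "int n + (i + 1) = 2 * k" "\<bar>i + 1\<bar> \<le> int n \<longleftrightarrow> k \<le> int n"
      using k by auto
    have right: "line_walks n (i + 1) = (if k \<le> int n then of_nat (n choose nat k) else 0)"
      using Suc[of "i + 1"] unfolding r(1) by (simp add: r(2))
    have pascal: "of_nat (Suc n choose nat k) =
        (if 1 \<le> k then of_nat (n choose nat (k - 1)) else 0) +
        (if k \<le> int n then of_nat (n choose nat k) else (0::complex))"
    proof (cases "k = 0")
      case False
      then obtain j where j: "nat k = Suc j"
        using k by (metis nat_eq_iff2 not0_implies_Suc of_nat_eq_0_iff)
      then show ?thesis
        using False k by (auto simp: binomial_eq_0 nat_diff_distrib)
    qed simp
    have "even (int (Suc n) + i) \<and> \<bar>i\<bar> \<le> int (Suc n)"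
      using True by (simp add: add.assoc)
    moreover have "nat ((int (Suc n) + i) div 2) = nat k"
      using k by simp
    ultimately show ?thesis
      by (simp only: simp_thms if_True line_walks.simps left right pascal)
  qed
qed

lemma line_walks_origin: "line_walks l 0 = (if even l then of_nat (l choose (l div 2)) else 0)"
  by (simp add: line_walks_closed_form nat_div_distrib)

text \<open>A walk of length \<open>m\<close> with \<open>l\<close> vertical steps interleaves a horizontal walk of length
  \<open>m - l\<close> with a vertical one of length \<open>l\<close>.\<close>
definition free_walks :: "complex \<Rightarrow> nat \<Rightarrow> int \<times> int \<Rightarrow> complex" where
  "free_walks v m q =
     (\<Sum>l\<le>m. of_nat (m choose l) * v ^ l * line_walks (m - l) (fst q) * line_walks l (snd q))"

lemma free_walks_eq_0:
  assumes "\<bar>i\<bar> > int m \<or> \<bar>j\<bar> > int m"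
  shows "free_walks v m (i, j) = 0"
  unfolding free_walks_def
  by (rule sum.neutral) (use assms line_walks_eq_0 in force)

lemma free_walks_0: "free_walks v 0 q = (if q = (0, 0) then 1 else 0)"
  by (cases q) (auto simp: free_walks_def)

lemma sum_binomial_Suc:
  fixes F :: "nat \<Rightarrow> 'a::comm_semiring_1"
  shows "(\<Sum>l\<le>Suc m. of_nat (Suc m choose l) * F l) =
         (\<Sum>l\<le>m. of_nat (m choose l) * F l) + (\<Sum>l\<le>m. of_nat (m choose l) * F (Suc l))"
proof -
  have "(\<Sum>l\<le>Suc m. of_nat (Suc m choose l) * F l) =
      (F 0 + (\<Sum>l\<le>m. of_nat (m choose Suc l) * F (Suc l))) + (\<Sum>l\<le>m. of_nat (m choose l) * F (Suc l))"
    by (subst sum.atMost_Suc_shift) (simp add: sum.distrib algebra_simps)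
  also have "F 0 + (\<Sum>l\<le>m. of_nat (m choose Suc l) * F (Suc l)) = (\<Sum>l\<le>Suc m. of_nat (m choose l) * F l)"
    by (subst sum.atMost_Suc_shift) simp
  also have "\<dots> = (\<Sum>l\<le>m. of_nat (m choose l) * F l)"
    by (simp add: binomial_eq_0)
  finally show ?thesis .
qed

lemma free_walks_Suc:
  "free_walks v (Suc m) (i, j) =
     free_walks v m (i - 1, j) + free_walks v m (i + 1, j) +
     v * free_walks v m (i, j - 1) + v * free_walks v m (i, j + 1)"
proof -
  have "free_walks v (Suc m) (i, j) =
      (\<Sum>l\<le>Suc m. of_nat (Suc m choose l) * (v ^ l * line_walks (Suc m - l) i * line_walks l j))"
    unfolding free_walks_def by (simp add: algebra_simps)
  also have "\<dots> = (\<Sum>l\<le>m. of_nat (m choose l) * (v ^ l * line_walks (Suc m - l) i * line_walks l j)) +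
      (\<Sum>l\<le>m. of_nat (m choose l) * (v ^ Suc l * line_walks (m - l) i * line_walks (Suc l) j))"
    by (subst sum_binomial_Suc) simp
  also have "\<dots> = free_walks v m (i - 1, j) + free_walks v m (i + 1, j) +
      (v * free_walks v m (i, j - 1) + v * free_walks v m (i, j + 1))"
    unfolding free_walks_def
    by (simp add: Suc_diff_le sum.distrib sum_distrib_left algebra_simps)
  finally show ?thesis by simp
qed

lemma free_walks_laurent:
  assumes "x \<noteq> 0" "y \<noteq> 0" "m \<le> M" "m \<le> N"
  shows "(\<Sum>q\<in>{-int M..int M} \<times> {-int N..int N}. free_walks v m q * (x powi fst q * y powi snd q)) =
    (x + 1/x + v * (y + 1/y)) ^ m"
proof -
  have "(\<Sum>q\<in>{-int M..int M} \<times> {-int N..int N}. free_walks v m q * (x powi fst q * y powi snd q)) =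
      (\<Sum>l\<le>m. of_nat (m choose l) * v ^ l *
         (\<Sum>i\<in>{-int M..int M}. line_walks (m - l) i * x powi i) *
         (\<Sum>j\<in>{-int N..int N}. line_walks l j * y powi j))"
    unfolding free_walks_def sum.cartesian_product'
    by (simp add: sum_distrib_left sum_distrib_right sum.swap[of _ "{..m}"] mult_ac)
  also have "\<dots> = (\<Sum>l\<le>m. of_nat (m choose l) * (v * (y + 1/y)) ^ l * (x + 1/x) ^ (m - l))"
  proof (rule sum.cong[OF refl])
    fix l assume "l \<in> {..m}"
    then have "m - l \<le> M" "l \<le> N"
      using assms by auto
    then show "of_nat (m choose l) * v ^ l * (\<Sum>i\<in>{-int M..int M}. line_walks (m - l) i * x powi i) *
        (\<Sum>j\<in>{-int N..int N}. line_walks l j * y powi j) =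
        of_nat (m choose l) * (v * (y + 1/y)) ^ l * (x + 1/x) ^ (m - l)"
      by (simp add: line_walks_laurent_le assms power_mult_distrib)
  qed
  also have "\<dots> = (v * (y + 1/y) + (x + 1/x)) ^ m"
    by (rule binomial_ring[symmetric])
  also have "\<dots> = (x + 1/x + v * (y + 1/y)) ^ m"
    by (simp only: add.commute)
  finally show ?thesis .
qed

lemma free_walks_laurent_shift:
  assumes "x \<noteq> 0" "m + k \<le> N"
  shows "(\<Sum>i\<in>{-int N..int N}. free_walks v m (i + int k, j) * x powi i) =
    x powi (- int k) * (\<Sum>i\<in>{-int m..int m}. free_walks v m (i, j) * x powi i)"
proof (rule laurent_sum_shift)
  show "\<bar>i\<bar> \<le> int m" if "free_walks v m (i, j) \<noteq> 0" for i
    using that by (cases "\<bar>i\<bar> \<le> int m") (auto simp: free_walks_eq_0)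
qed (use assms in auto)

section \<open>Walks on the slit plane\<close>

definition slit_count :: "complex \<Rightarrow> nat \<Rightarrow> int \<times> int \<Rightarrow> complex" where
  "slit_count v n q = (\<Sum>ws\<in>{ws\<in>slit_walks n. walk_pos ws n = q}. v ^ vert ws)"

lemma finite_slit_walks: "finite (slit_walks n)"
proof (rule finite_subset)
  show "slit_walks n \<subseteq> {ws. set ws \<subseteq> sq_steps \<and> length ws = n}"
    by (auto simp: slit_walks_def slit_walk_def)
  show "finite {ws. set ws \<subseteq> sq_steps \<and> length ws = n}"
    by (rule finite_lists_length_eq) (simp add: sq_steps_def)
qed

lemma sum_list_steps_bounded:
  assumes "set ws \<subseteq> sq_steps"
  shows "\<bar>sum_list (map fst ws)\<bar> \<le> int (length ws) \<and> \<bar>sum_list (map snd ws)\<bar> \<le> int (length ws)"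
  using assms
proof (induction ws)
  case (Cons s ws)
  then have "\<bar>fst s\<bar> \<le> 1 \<and> \<bar>snd s\<bar> \<le> 1"
    by (auto simp: sq_steps_def)
  then show ?case
    using Cons by auto
qed simp

lemma walk_pos_in_box:
  assumes "ws \<in> slit_walks n"
  shows "walk_pos ws n \<in> {-int n..int n} \<times> {-int n..int n}"
  using assms sum_list_steps_bounded[of ws]
  by (auto simp: slit_walks_def slit_walk_def walk_pos_def abs_le_iff)

lemma S_gf_nth:
  "S_gf x y v $ n =
     (\<Sum>q\<in>{-int n..int n} \<times> {-int n..int n}. slit_count v n q * (x powi fst q * y powi snd q))"
proof -
  let ?B = "{-int n..int n} \<times> {-int n..int n}"
  let ?h = "\<lambda>ws. x powi fst (walk_pos ws n) * y powi snd (walk_pos ws n) * v ^ vert ws"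
  have "finite ?B"
    by simp
  moreover have "(\<lambda>ws. walk_pos ws n) ` slit_walks n \<subseteq> ?B"
    using walk_pos_in_box by blast
  ultimately have "S_gf x y v $ n = (\<Sum>q\<in>?B. sum ?h {ws\<in>slit_walks n. walk_pos ws n = q})"
    unfolding S_gf_def fps_nth_Abs_fps by (rule sum.group[symmetric, OF finite_slit_walks])
  also have "\<dots> = (\<Sum>q\<in>?B. slit_count v n q * (x powi fst q * y powi snd q))"
    unfolding slit_count_def sum_distrib_right
    by (intro sum.cong refl) (auto simp: mult_ac)
  finally show ?thesis .
qed

lemma slit_count_0: "slit_count v 0 q = (if q = (0, 0) then 1 else 0)"
proof -
  have "slit_walks 0 = {[]}"
    by (auto simp: slit_walks_def slit_walk_def)
  then show ?thesis
    by (auto simp: slit_count_def walk_pos_def vert_def)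
qed

lemma walk_pos_snoc:
  "walk_pos (ws @ [s]) m =
     (if m \<le> length ws then walk_pos ws m
      else (fst (walk_pos ws (length ws)) + fst s, snd (walk_pos ws (length ws)) + snd s))"
  if "m \<le> Suc (length ws)"
  using that by (auto simp: walk_pos_def le_Suc_eq)

lemma slit_walk_snoc:
  "slit_walk (ws @ [s]) \<longleftrightarrow>
     slit_walk ws \<and> s \<in> sq_steps \<and> walk_pos (ws @ [s]) (Suc (length ws)) \<notin> slit"
proof -
  have "(\<forall>m. 1 \<le> m \<and> m \<le> Suc (length ws) \<longrightarrow> walk_pos (ws @ [s]) m \<notin> slit) \<longleftrightarrow>
      (\<forall>m. 1 \<le> m \<and> m \<le> length ws \<longrightarrow> walk_pos ws m \<notin> slit) \<and>
      walk_pos (ws @ [s]) (Suc (length ws)) \<notin> slit"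
    using walk_pos_snoc[of _ ws s] by (auto simp: le_Suc_eq)
  then show ?thesis
    unfolding slit_walk_def by auto
qed

lemma slit_walks_Suc_ending_at:
  assumes "(i, j) \<notin> slit"
  shows "{ws\<in>slit_walks (Suc n). walk_pos ws (Suc n) = (i, j)} =
    (\<lambda>(s, ws). ws @ [s]) ` (SIGMA s:sq_steps. {ws\<in>slit_walks n. walk_pos ws n = (i - fst s, j - snd s)})"
    (is "?W = ?snoc ` ?T")
proof -
  have last_step: "walk_pos (ws @ [s]) (Suc n) = (i, j) \<longleftrightarrow> walk_pos ws n = (i - fst s, j - snd s)"
    if "length ws = n" for ws s
    using walk_pos_snoc[of "Suc n" ws s] that by (cases "walk_pos ws n") auto
  show ?thesis
  proof (intro equalityI subsetI)
    fix ws' assume ws': "ws' \<in> ?W"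
    obtain ws s where ws: "ws' = ws @ [s]" "length ws = n"
      using ws' length_Suc_conv_rev[of ws' n] by (auto simp: slit_walks_def)
    then have "(s, ws) \<in> ?T"
      using ws' last_step[OF ws(2)] by (simp add: slit_walks_def slit_walk_snoc)
    then show "ws' \<in> ?snoc ` ?T"
      using ws by force
  next
    fix ws' assume "ws' \<in> ?snoc ` ?T"
    then obtain s ws where sws: "(s, ws) \<in> ?T" "ws' = ws @ [s]"
      by auto
    then have len: "length ws = n"
      by (simp add: slit_walks_def)
    moreover have "walk_pos (ws @ [s]) (Suc n) = (i, j)"
      using sws last_step[OF len] by simp
    ultimately show "ws' \<in> ?W"
      using sws assms by (simp add: slit_walks_def slit_walk_snoc)
  qed
qed

lemma slit_count_Suc:
  "slit_count v (Suc n) (i, j) =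
     (if (i, j) \<in> slit then 0 else
      slit_count v n (i - 1, j) + slit_count v n (i + 1, j) +
      v * slit_count v n (i, j - 1) + v * slit_count v n (i, j + 1))"
proof (cases "(i, j) \<in> slit")
  case True
  then have "{ws\<in>slit_walks (Suc n). walk_pos ws (Suc n) = (i, j)} = {}"
    by (auto simp: slit_walks_def slit_walk_def)
  then show ?thesis
    using True unfolding slit_count_def by (simp only: sum.empty if_True)
next
  case False
  define T where "T = (SIGMA s:sq_steps. {ws\<in>slit_walks n. walk_pos ws n = (i - fst s, j - snd s)})"
  have "inj_on (\<lambda>(s, ws). ws @ [s]) T"
    by (auto simp: inj_on_def)
  then have "slit_count v (Suc n) (i, j) = (\<Sum>(s, ws)\<in>T. v ^ vert (ws @ [s]))"
    unfolding slit_count_def slit_walks_Suc_ending_at[OF False] T_def[symmetric]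
    by (simp add: sum.reindex case_prod_unfold)
  also have "\<dots> = (\<Sum>s\<in>sq_steps. \<Sum>ws\<in>{ws\<in>slit_walks n. walk_pos ws n = (i - fst s, j - snd s)}.
      v ^ vert (ws @ [s]))"
    unfolding T_def
    by (rule sum.Sigma[symmetric]) (use finite_slit_walks in \<open>auto simp: sq_steps_def\<close>)
  also have "\<dots> = (\<Sum>s\<in>sq_steps. (if fst s = 0 then v else 1) * slit_count v n (i - fst s, j - snd s))"
    unfolding slit_count_def sum_distrib_left
    by (intro sum.cong refl) (simp add: vert_def)
  also have "\<dots> = slit_count v n (i - 1, j) + slit_count v n (i + 1, j) +
      v * slit_count v n (i, j - 1) + v * slit_count v n (i, j + 1)"
    by (simp add: sq_steps_def)
  finally show ?thesis
    using False by simp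
qed

section \<open>Power series with polynomial coefficients\<close>

definition poly_deg_le :: "nat \<Rightarrow> (complex \<Rightarrow> complex) \<Rightarrow> bool" where
  "poly_deg_le n f \<longleftrightarrow> (\<exists>p. degree p \<le> n \<and> f = poly p)"

lemma poly_deg_le_const: "poly_deg_le n (\<lambda>z. c)"
  unfolding poly_deg_le_def by (intro exI[of _ "[:c:]"]) auto

lemma poly_deg_le_id: "poly_deg_le 1 (\<lambda>z. z)"
  unfolding poly_deg_le_def by (intro exI[of _ "[:0, 1:]"]) auto

lemma poly_deg_le_add:
  assumes "poly_deg_le n f" "poly_deg_le n g"
  shows "poly_deg_le n (\<lambda>z. f z + g z)"
proof -
  obtain p q where "degree p \<le> n" "f = poly p" "degree q \<le> n" "g = poly q"
    using assms unfolding poly_deg_le_def by blast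
  then show ?thesis
    unfolding poly_deg_le_def by (intro exI[of _ "p + q"]) (auto intro: degree_add_le)
qed

lemma poly_deg_le_mult:
  assumes "poly_deg_le a f" "poly_deg_le b g"
  shows "poly_deg_le (a + b) (\<lambda>z. f z * g z)"
proof -
  obtain p q where "degree p \<le> a" "f = poly p" "degree q \<le> b" "g = poly q"
    using assms unfolding poly_deg_le_def by blast
  then show ?thesis
    unfolding poly_deg_le_def
    by (intro exI[of _ "p * q"]) (auto intro: order.trans[OF degree_mult_le])
qed

lemma poly_deg_le_mono: "poly_deg_le m f \<Longrightarrow> m \<le> n \<Longrightarrow> poly_deg_le n f"
  unfolding poly_deg_le_def using order.trans by blast

lemma poly_deg_le_cmult: "poly_deg_le n f \<Longrightarrow> poly_deg_le n (\<lambda>z. c * f z)"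
  using poly_deg_le_mult[OF poly_deg_le_const[of 0 c]] by simp

lemma poly_deg_le_diff: "poly_deg_le n f \<Longrightarrow> poly_deg_le n g \<Longrightarrow> poly_deg_le n (\<lambda>z. f z - g z)"
  using poly_deg_le_add[of n f "\<lambda>z. -1 * g z"] poly_deg_le_cmult[of n g "-1"] by simp

lemma poly_deg_le_sum:
  "(\<And>i. i \<in> A \<Longrightarrow> poly_deg_le n (f i)) \<Longrightarrow> poly_deg_le n (\<lambda>z. \<Sum>i\<in>A. f i z)"
  by (induction A rule: infinite_finite_induct) (auto intro: poly_deg_le_const poly_deg_le_add)

lemma poly_deg_le_convolution:
  assumes "A \<subseteq> {..n}"
    and "\<And>i. i \<in> A \<Longrightarrow> poly_deg_le i (f i)" "\<And>i. i \<in> A \<Longrightarrow> poly_deg_le (n - i) (g i)"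
  shows "poly_deg_le n (\<lambda>z. \<Sum>i\<in>A. f i z * g i z)"
proof (rule poly_deg_le_sum)
  fix i assume "i \<in> A"
  then have "i \<le> n"
    using assms(1) by auto
  then show "poly_deg_le n (\<lambda>z. f i z * g i z)"
    using poly_deg_le_mult[OF assms(2,3)[OF \<open>i \<in> A\<close>]] by simp
qed

definition poly_coeffs :: "(complex \<Rightarrow> complex fps) \<Rightarrow> bool" where
  "poly_coeffs F \<longleftrightarrow> (\<forall>n. poly_deg_le n (\<lambda>z. F z $ n))"

lemma poly_coeffs_const: "poly_coeffs (\<lambda>z. A)"
  by (simp add: poly_coeffs_def poly_deg_le_const)

lemma poly_coeffs_add: "poly_coeffs F \<Longrightarrow> poly_coeffs G \<Longrightarrow> poly_coeffs (\<lambda>z. F z + G z)"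
  by (simp add: poly_coeffs_def poly_deg_le_add)

lemma poly_coeffs_diff: "poly_coeffs F \<Longrightarrow> poly_coeffs G \<Longrightarrow> poly_coeffs (\<lambda>z. F z - G z)"
  by (simp add: poly_coeffs_def poly_deg_le_diff)

lemma poly_coeffs_mult_const:
  assumes "A $ 0 = 0" "poly_deg_le 1 f"
  shows "poly_coeffs (\<lambda>z. A * fps_const (f z))"
  unfolding poly_coeffs_def
proof
  fix n
  show "poly_deg_le n (\<lambda>z. (A * fps_const (f z)) $ n)"
  proof (cases n)
    case 0
    then show ?thesis
      using assms(1) by (simp add: poly_deg_le_const)
  next
    case (Suc m)
    then show ?thesis
      using poly_deg_le_cmult[OF assms(2), of "A $ n"] by (auto elim: poly_deg_le_mono)
  qed
qed

lemma poly_coeffs_mult: "poly_coeffs F \<Longrightarrow> poly_coeffs G \<Longrightarrow> poly_coeffs (\<lambda>z. F z * G z)"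
  unfolding poly_coeffs_def fps_mult_nth by (auto intro!: poly_deg_le_convolution)

lemma poly_coeffs_inverse:
  assumes F: "poly_coeffs F" and c: "\<And>z. F z $ 0 = c" "c \<noteq> 0"
  shows "poly_coeffs (\<lambda>z. inverse (F z))"
  unfolding poly_coeffs_def
proof
  fix n
  show "poly_deg_le n (\<lambda>z. inverse (F z) $ n)"
  proof (induction n rule: less_induct)
    case (less n)
    show ?case
    proof (cases n)
      case 0
      then show ?thesis
        using c by (simp add: poly_deg_le_const)
    next
      case (Suc m)
      have eq: "inverse (F z) $ n = (-1 / c) * (\<Sum>i\<in>{1..n}. F z $ i * inverse (F z) $ (n - i))" for z
      proof -
        have "(F z * inverse (F z)) $ n = 0"
          using c Suc by (simp add: inverse_mult_eq_1')
        then have "c * inverse (F z) $ n + (\<Sum>i\<in>{1..n}. F z $ i * inverse (F z) $ (n - i)) = 0"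
          using c by (simp add: fps_mult_nth sum.atLeast_Suc_atMost)
        then show ?thesis
          using c by (simp add: field_simps eq_neg_iff_add_eq_0)
      qed
      have "poly_deg_le n (\<lambda>z. \<Sum>i\<in>{1..n}. F z $ i * inverse (F z) $ (n - i))"
        using F less by (intro poly_deg_le_convolution) (auto simp: poly_coeffs_def)
      then have "poly_deg_le n (\<lambda>z. (-1 / c) * (\<Sum>i\<in>{1..n}. F z $ i * inverse (F z) $ (n - i)))"
        by (rule poly_deg_le_cmult)
      then show ?thesis
        by (simp only: eq)
    qed
  qed
qed

lemma fps_sqrt_nth_0 [simp]: "fps_sqrt a $ 0 = csqrt (a $ 0)"
  by (simp add: fps_sqrt_def)

lemma fps_sqrt_power2: "a $ 0 \<noteq> 0 \<Longrightarrow> fps_sqrt a ^ 2 = a"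
  unfolding fps_sqrt_def
  using power_radical[of a "\<lambda>_ z. csqrt z" 1] power2_csqrt[of "a $ 0", unfolded power2_eq_square]
  by (simp add: numeral_2_eq_2)

lemma fps_eq_if_power2_eq:
  fixes P Q :: "complex fps"
  assumes "P ^ 2 = Q ^ 2" "P $ 0 = Q $ 0" "P $ 0 \<noteq> 0"
  shows "P = Q"
proof -
  have "(P - Q) * (P + Q) = 0"
    using assms(1) by (simp add: algebra_simps power2_eq_square)
  moreover have "(P + Q) $ 0 \<noteq> 0"
    using assms(2,3) by (simp flip: mult_2)
  then have "P + Q \<noteq> 0"
    by (metis fps_zero_nth)
  ultimately show ?thesis
    by simp
qed

lemma poly_coeffs_sqrt:
  assumes F: "poly_coeffs F" and c: "\<And>z. F z $ 0 = c" "c \<noteq> 0"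
  shows "poly_coeffs (\<lambda>z. fps_sqrt (F z))"
  unfolding poly_coeffs_def
proof
  fix n
  show "poly_deg_le n (\<lambda>z. fps_sqrt (F z) $ n)"
  proof (induction n rule: less_induct)
    case (less n)
    show ?case
    proof (cases n)
      case 0
      then show ?thesis
        using c by (simp add: poly_deg_le_const)
    next
      case (Suc m)
      let ?S = "\<lambda>z. fps_sqrt (F z)"
      have eq: "?S z $ n = (1 / (2 * csqrt c)) * (F z $ n - (\<Sum>i\<in>{1..m}. ?S z $ i * ?S z $ (n - i)))" for z
      proof -
        have "F z $ n = (?S z ^ 2) $ n"
          using fps_sqrt_power2[of "F z"] c by simp
        also have "\<dots> = (\<Sum>i=0..n. ?S z $ i * ?S z $ (n - i))"
          by (simp add: fps_square_nth atLeast0AtMost)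
        also have "\<dots> = 2 * csqrt c * ?S z $ n + (\<Sum>i\<in>{1..m}. ?S z $ i * ?S z $ (n - i))"
          using Suc c by (simp add: sum.atLeast_Suc_atMost algebra_simps)
        finally show ?thesis
          using c by (simp add: field_simps)
      qed
      have "poly_deg_le n (\<lambda>z. \<Sum>i\<in>{1..m}. ?S z $ i * ?S z $ (n - i))"
        using less Suc by (intro poly_deg_le_convolution) auto
      then have "poly_deg_le n (\<lambda>z. (1 / (2 * csqrt c)) *
          (F z $ n - (\<Sum>i\<in>{1..m}. ?S z $ i * ?S z $ (n - i))))"
        using F unfolding poly_coeffs_def by (intro poly_deg_le_cmult poly_deg_le_diff) auto
      then show ?thesis
        by (simp only: eq)
    qed
  qed
qed

section \<open>Returns to the horizontal axis\<close>

lemma central_binomial_Suc: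
  "(2*k + 2) * ((2*k + 2) choose (k + 1)) = 4 * (2*k + 1) * ((2*k) choose k)"
proof -
  have "Suc k * (Suc (Suc (2*k)) choose Suc k) = Suc k * (2 * (Suc (2*k) choose k))"
    using Suc_times_binomial[of k "Suc (2*k)"] by (simp del: binomial_Suc_Suc)
  then have half: "(2*k + 2) choose (k + 1) = 2 * (Suc (2*k) choose k)"
    using mult_left_cancel[of "Suc k"] by (simp del: binomial_Suc_Suc)
  have "Suc k * (Suc (2*k) choose Suc k) = Suc (2*k) * ((2*k) choose k)"
    by (rule Suc_times_binomial)
  moreover have "Suc (2*k) choose Suc k = Suc (2*k) choose k"
    using binomial_symmetric[of k "Suc (2*k)"] by simp
  ultimately show ?thesis
    unfolding half by (simp del: binomial_Suc_Suc add: algebra_simps)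
qed

lemma line_walks_origin_Suc_Suc:
  "of_nat (n + 2) * line_walks (n + 2) 0 = 4 * of_nat (n + 1) * line_walks n 0"
proof (cases "even n")
  case True
  then obtain k where "n = 2 * k"
    by (auto elim: evenE)
  moreover have "of_nat ((2*k + 2) * ((2*k + 2) choose (k + 1))) =
      (of_nat (4 * (2*k + 1) * ((2*k) choose k)) :: complex)"
    by (simp only: central_binomial_Suc)
  ultimately show ?thesis
    by (simp add: line_walks_origin algebra_simps)
qed (simp add: line_walks_origin)

definition central_gf :: "complex fps" where
  "central_gf = Abs_fps (\<lambda>l. line_walks l 0)"

lemma central_gf_ode:
  "(1 - fps_const 4 * fps_X ^ 2) * fps_deriv central_gf = fps_const 4 * fps_X * central_gf"
proof (rule fps_ext)
  fix n
  have "(1 - fps_const 4 * fps_X ^ 2) * fps_deriv central_gf =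
      fps_deriv central_gf - fps_const 4 * (fps_X ^ 2 * fps_deriv central_gf)"
    by (simp add: algebra_simps)
  then have "((1 - fps_const 4 * fps_X ^ 2) * fps_deriv central_gf) $ n =
      fps_deriv central_gf $ n - 4 * (if n < 2 then 0 else fps_deriv central_gf $ (n - 2))"
    by (simp add: fps_X_power_mult_nth)
  moreover have "(fps_const 4 * fps_X * central_gf) $ n = (if n = 0 then 0 else 4 * line_walks (n - 1) 0)"
    by (simp add: central_gf_def mult.assoc del: line_walks.simps)
  moreover consider "n = 0" | "n = 1" | m where "n = m + 2"
    by (metis One_nat_def add_2_eq_Suc' not0_implies_Suc)
  then have "fps_deriv central_gf $ n - 4 * (if n < 2 then 0 else fps_deriv central_gf $ (n - 2)) =
      (if n = 0 then 0 else 4 * line_walks (n - 1) 0)"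
  proof cases
    case (3 m)
    then show ?thesis
      using line_walks_origin_Suc_Suc[of "m + 1"]
      by (simp add: central_gf_def algebra_simps del: line_walks.simps)
  qed (simp_all add: central_gf_def line_walks_origin)
  ultimately show "((1 - fps_const 4 * fps_X ^ 2) * fps_deriv central_gf) $ n =
      (fps_const 4 * fps_X * central_gf) $ n"
    by simp
qed

lemma central_gf_square: "central_gf ^ 2 * (1 - fps_const 4 * fps_X ^ 2) = 1"
proof -
  let ?G = central_gf and ?P = "1 - fps_const 4 * fps_X ^ 2 :: complex fps"
  have dP: "fps_deriv ?P = - (2 * fps_const 4) * fps_X"
    by (rule fps_ext) (auto simp: numeral_2_eq_2 fps_numeral_nth)
  have "fps_deriv (?G ^ 2 * ?P) = 2 * (?G * (?P * fps_deriv ?G)) + ?G ^ 2 * fps_deriv ?P"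
    by (simp add: power2_eq_square algebra_simps mult_2)
  also have "\<dots> = 0"
    unfolding central_gf_ode dP by (simp add: algebra_simps power2_eq_square)
  finally have "?G ^ 2 * ?P = fps_const ((?G ^ 2 * ?P) $ 0)"
    by (simp only: fps_deriv_eq_0_iff)
  also have "(?G ^ 2 * ?P) $ 0 = 1"
    by (simp add: central_gf_def power2_eq_square)
  finally show ?thesis
    by simp
qed

lemma inverse_one_minus_const_X_power_nth:
  "inverse (1 - fps_const u * fps_X) ^ Suc l $ k = of_nat ((l + k) choose k) * (u :: complex) ^ k"
  by (simp add: one_minus_const_fps_X_neg_power' flip: fps_inverse_power del: power_Suc)

lemma fps_compose_nth_truncate:
  assumes "w $ 0 = 0" "j \<le> m"
  shows "(a oo w) $ j = (\<Sum>l\<le>m. fps_const (a $ l) * w ^ l) $ j"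
  unfolding fps_compose_nth fps_sum_nth fps_mult_left_const_nth
proof (rule sum_eq_on_common_support)
  fix i
  assume "a $ i * (w ^ i) $ j \<noteq> 0"
  then have "\<not> j < i"
    using startsby_zero_power_prefix[OF assms(1)] by auto
  then show "i \<in> {0..j} \<inter> {..m}"
    using assms(2) by auto
qed auto

text \<open>\<open>row_gf u v = 1 / sqrt ((1 - u t)\<^sup>2 - 4 v\<^sup>2 t\<^sup>2)\<close>, see \<open>row_gf_square\<close>.\<close>
definition row_gf :: "complex \<Rightarrow> complex \<Rightarrow> complex fps" where
  "row_gf u v = inverse (1 - fps_const u * fps_X) *
     (central_gf oo (fps_const v * fps_X * inverse (1 - fps_const u * fps_X)))"

lemma row_gf_nth:
  "row_gf u v $ m = (\<Sum>l\<le>m. of_nat (m choose l) * v ^ l * line_walks l 0 * u ^ (m - l))"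
proof -
  let ?Q = "inverse (1 - fps_const u * fps_X)"
  let ?w = "fps_const v * fps_X * ?Q"
  have "(central_gf oo ?w) $ j = (\<Sum>l\<le>m. fps_const (central_gf $ l) * ?w ^ l) $ j" if "j \<le> m" for j
    by (rule fps_compose_nth_truncate) (simp_all add: that mult.assoc)
  then have "row_gf u v $ m = (?Q * (\<Sum>l\<le>m. fps_const (central_gf $ l) * ?w ^ l)) $ m"
    unfolding row_gf_def fps_mult_nth by (intro sum.cong refl) simp
  also have "?Q * (\<Sum>l\<le>m. fps_const (central_gf $ l) * ?w ^ l) =
      (\<Sum>l\<le>m. fps_const (line_walks l 0 * v ^ l) * (fps_X ^ l * ?Q ^ Suc l))"
    unfolding sum_distrib_left
    by (intro sum.cong refl)
       (simp only: central_gf_def fps_nth_Abs_fps power_mult_distrib fps_const_power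
         fps_const_mult[symmetric] power_Suc mult_ac)
  also have "\<dots> $ m = (\<Sum>l\<le>m. line_walks l 0 * v ^ l * (fps_X ^ l * ?Q ^ Suc l) $ m)"
    unfolding fps_sum_nth fps_mult_left_const_nth ..
  also have "\<dots> = (\<Sum>l\<le>m. of_nat (m choose l) * v ^ l * line_walks l 0 * u ^ (m - l))"
  proof (intro sum.cong refl)
    fix l assume "l \<in> {..m}"
    then have "m choose (m - l) = m choose l"
      using binomial_symmetric[of l m] by simp
    with \<open>l \<in> {..m}\<close> show "line_walks l 0 * v ^ l * (fps_X ^ l * ?Q ^ Suc l) $ m =
        of_nat (m choose l) * v ^ l * line_walks l 0 * u ^ (m - l)"
      by (simp add: fps_X_power_mult_nth inverse_one_minus_const_X_power_nth del: power_Suc)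
  qed
  finally show ?thesis .
qed

lemma row_gf_nth_0 [simp]: "row_gf u v $ 0 = 1"
  by (simp add: row_gf_nth)

lemma row_gf_square:
  "row_gf u v ^ 2 * ((1 - fps_const u * fps_X) ^ 2 - 4 * fps_const v ^ 2 * fps_X ^ 2) = 1"
proof -
  let ?Q = "inverse (1 - fps_const u * fps_X)"
  let ?w = "fps_const v * fps_X * ?Q"
  have w0: "?w $ 0 = 0"
    by (simp add: mult.assoc)
  have "(central_gf oo ?w) ^ 2 * (1 - fps_const 4 * ?w ^ 2) =
      (central_gf ^ 2 * (1 - fps_const 4 * fps_X ^ 2)) oo ?w"
    by (simp add: w0 fps_compose_mult_distrib fps_compose_sub_distrib
        flip: fps_compose_power)
  also have "\<dots> = 1"
    by (simp add: central_gf_square)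
  finally have composed: "(central_gf oo ?w) ^ 2 * (1 - fps_const 4 * ?w ^ 2) = 1" .
  let ?A = "1 - fps_const u * fps_X" and ?B = "4 * fps_const v ^ 2 * fps_X ^ 2"
  have "?Q ^ 2 * (?A ^ 2 - ?B) = ?Q ^ 2 * ?A ^ 2 - ?Q ^ 2 * ?B"
    by (rule right_diff_distrib)
  also have "?Q ^ 2 * ?A ^ 2 = (?Q * ?A) ^ 2"
    by (rule power_mult_distrib[symmetric])
  also have "?Q * ?A = 1"
    by (simp add: inverse_mult_eq_1)
  also have "?Q ^ 2 * ?B = fps_const 4 * ?w ^ 2"
    by (simp add: power_mult_distrib mult_ac numeral_fps_const)
  finally have kernel: "?Q ^ 2 * (?A ^ 2 - ?B) = 1 - fps_const 4 * ?w ^ 2"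
    by (simp only: power_one)
  have "row_gf u v ^ 2 * (?A ^ 2 - ?B) = (central_gf oo ?w) ^ 2 * (?Q ^ 2 * (?A ^ 2 - ?B))"
    unfolding row_gf_def by (simp only: power_mult_distrib mult_ac)
  also have "\<dots> = 1"
    unfolding kernel by (rule composed)
  finally show ?thesis .
qed

lemma free_walks_row_laurent:
  assumes "x \<noteq> 0"
  shows "(\<Sum>i\<in>{-int m..int m}. free_walks v m (i, 0) * x powi i) = row_gf (x + 1/x) v $ m"
proof -
  have "(\<Sum>i\<in>{-int m..int m}. free_walks v m (i, 0) * x powi i) =
      (\<Sum>l\<le>m. of_nat (m choose l) * v ^ l * line_walks l 0 *
        (\<Sum>i\<in>{-int m..int m}. line_walks (m - l) i * x powi i))"
    unfolding free_walks_def
    by (simp add: sum_distrib_left sum_distrib_right sum.swap[of _ "{-int m..int m}"] mult_ac)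
  also have "\<dots> = (\<Sum>l\<le>m. of_nat (m choose l) * v ^ l * line_walks l 0 * (x + 1/x) ^ (m - l))"
    by (intro sum.cong refl) (simp add: line_walks_laurent_le assms)
  also have "\<dots> = row_gf (x + 1/x) v $ m"
    by (simp add: row_gf_nth)
  finally show ?thesis .
qed

section \<open>The numerator\<close>

definition delta :: "complex \<Rightarrow> complex fps" where
  "delta v = (1 - 2 * fps_X * fps_const (1 + v)) * (1 + 2 * fps_X * fps_const (1 - v))"

lemma delta_eq: "delta v = (1 - 2 * fps_X * fps_const v) ^ 2 - 4 * fps_X ^ 2"
  unfolding delta_def by (simp add: algebra_simps power2_eq_square flip: fps_const_add fps_const_sub)

lemma delta_nth_0 [simp]: "delta v $ 0 = 1"
  by (simp add: delta_def)

definition sqrt_factor :: "complex \<Rightarrow> complex \<Rightarrow> complex fps" where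
  "sqrt_factor v z = fps_sqrt (1 - 2 * fps_X * fps_const (v + z) + fps_sqrt (delta v))"

definition numer :: "complex \<Rightarrow> complex \<Rightarrow> complex fps" where
  "numer v z = fps_const (1/2) * (sqrt_factor v z * sqrt_factor (-v) z)"

lemma sqrt_factor_uminus:
  "sqrt_factor (-v) z = fps_sqrt (1 + 2 * fps_X * fps_const (v - z) +
     fps_sqrt ((1 - 2 * fps_X * fps_const (1 - v)) * (1 + 2 * fps_X * fps_const (1 + v))))"
proof -
  have "1 - 2 * fps_X * fps_const (- v + z) = 1 + 2 * fps_X * fps_const (v - z)"
    by (simp add: algebra_simps flip: fps_const_neg fps_const_add fps_const_sub)
  moreover have "delta (-v) = (1 - 2 * fps_X * fps_const (1 - v)) * (1 + 2 * fps_X * fps_const (1 + v))"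
    by (simp add: delta_def)
  ultimately show ?thesis
    by (simp only: sqrt_factor_def)
qed

lemma sqrt_factor_radicand_nth_0: "(1 - 2 * fps_X * fps_const (v + z) + fps_sqrt (delta v)) $ 0 = 2"
  by (simp add: mult.assoc)

lemma sqrt_factor_power2:
  "sqrt_factor v z ^ 2 = sqrt_factor v 0 ^ 2 - 2 * fps_X * fps_const z"
  unfolding sqrt_factor_def
  by (simp add: fps_sqrt_power2 sqrt_factor_radicand_nth_0 algebra_simps flip: fps_const_add)

lemma numer_nth_0 [simp]: "numer v z $ 0 = 1"
proof -
  have "csqrt 2 * csqrt 2 = (2 :: complex)"
    using power2_csqrt[of 2] by (simp add: power2_eq_square)
  then show ?thesis
    by (simp add: numer_def sqrt_factor_def sqrt_factor_radicand_nth_0[simplified] mult.assoc)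
qed

lemma poly_coeffs_numer: "poly_coeffs (numer v)"
proof -
  have "poly_deg_le 1 (\<lambda>z. w + z)" for w
    using poly_deg_le_add[OF poly_deg_le_const poly_deg_le_id] .
  then have radicand: "poly_coeffs (\<lambda>z. 1 - 2 * fps_X * fps_const (w + z) + fps_sqrt (delta w))" for w
    by (intro poly_coeffs_add poly_coeffs_diff poly_coeffs_const poly_coeffs_mult_const) simp_all
  have "poly_coeffs (sqrt_factor w)" for w
    unfolding sqrt_factor_def
    by (rule poly_coeffs_sqrt[OF radicand sqrt_factor_radicand_nth_0]) simp
  then show ?thesis
    unfolding numer_def by (intro poly_coeffs_mult poly_coeffs_const)
qed

text \<open>\<open>\<alpha> = 1 - 2 u t + s\<close> is a root of \<open>\<alpha>\<^sup>2 - 2 (1 - 2 u t) \<alpha> + 4 t\<^sup>2\<close>.\<close>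
lemma kernel_root_product:
  fixes a s t u x z :: "'a::comm_ring_1"
  assumes "s ^ 2 = (1 - 2*t*u) ^ 2 - 4 * t ^ 2" "x * z = 1" "a = 1 - 2*t*u + s"
  shows "(a - 2*t*z) * (a - 2*t*x) = 2 * a * (1 - t * (x + z + 2*u))"
proof -
  have "(a - 2*t*z) * (a - 2*t*x) - 2 * a * (1 - t * (x + z + 2*u)) =
      (s ^ 2 - ((1 - 2*t*u) ^ 2 - 4 * t ^ 2)) + 4 * t ^ 2 * (x * z - 1)"
    unfolding assms(3) by (simp add: algebra_simps power2_eq_square)
  then show ?thesis
    using assms(1,2) by simp
qed

lemma sqrt_factor_power2_product:
  assumes "x * z = 1"
  shows "sqrt_factor v z ^ 2 * sqrt_factor v x ^ 2 =
    2 * sqrt_factor v 0 ^ 2 * (1 - fps_X * (fps_const x + fps_const z + 2 * fps_const v))"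
proof -
  have "fps_sqrt (delta v) ^ 2 = (1 - 2 * fps_X * fps_const v) ^ 2 - 4 * fps_X ^ 2"
    using fps_sqrt_power2[of "delta v"] delta_eq by simp
  moreover have "fps_const x * fps_const z = (1 :: complex fps)"
    using assms by simp
  moreover have "sqrt_factor v 0 ^ 2 = 1 - 2 * fps_X * fps_const v + fps_sqrt (delta v)"
    using sqrt_factor_power2[of v 0] unfolding sqrt_factor_def
    by (simp add: fps_sqrt_power2 sqrt_factor_radicand_nth_0[of v 0, simplified])
  ultimately show ?thesis
    unfolding sqrt_factor_power2[of v z] sqrt_factor_power2[of v x] by (rule kernel_root_product)
qed

lemma numer_kernel_identity:
  assumes "x \<noteq> 0"
  shows "numer v (1/x) * numer v x * row_gf (x + 1/x) v = numer v 0"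
proof (rule fps_eq_if_power2_eq)
  let ?h = "fps_const (1/2) :: complex fps"
  let ?A = "\<lambda>z. sqrt_factor v z" and ?B = "\<lambda>z. sqrt_factor (-v) z"
  let ?K = "\<lambda>w. 1 - fps_X * (fps_const x + fps_const (1/x) + 2 * fps_const w)"
  have A: "?A (1/x) ^ 2 * ?A x ^ 2 = 2 * ?A 0 ^ 2 * ?K v"
    using sqrt_factor_power2_product[of x "1/x" v] assms by simp
  have B: "?B (1/x) ^ 2 * ?B x ^ 2 = 2 * ?B 0 ^ 2 * ?K (-v)"
    using sqrt_factor_power2_product[of x "1/x" "-v"] assms by simp
  have "?K v * ?K (-v) = (1 - fps_const (x + 1/x) * fps_X) ^ 2 - 4 * fps_const v ^ 2 * fps_X ^ 2"
    by (simp add: algebra_simps power2_eq_square flip: fps_const_add fps_const_neg fps_const_mult)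
  then have D: "?K v * ?K (-v) * row_gf (x + 1/x) v ^ 2 = 1"
    using row_gf_square[of "x + 1/x" v] by (simp only: mult.commute)
  have h: "4 * ?h ^ 2 = 1"
    by (simp add: numeral_fps_const power2_eq_square)
  have "(numer v (1/x) * numer v x * row_gf (x + 1/x) v) ^ 2 =
      ?h ^ 2 * ?h ^ 2 * (?A (1/x) ^ 2 * ?A x ^ 2) * (?B (1/x) ^ 2 * ?B x ^ 2) * row_gf (x + 1/x) v ^ 2"
    unfolding numer_def by (simp add: power_mult_distrib mult_ac)
  also have "\<dots> = ?h ^ 2 * ?A 0 ^ 2 * ?B 0 ^ 2 * (4 * ?h ^ 2) * (?K v * ?K (-v) * row_gf (x + 1/x) v ^ 2)"
    unfolding A B by (simp add: mult_ac)
  also have "\<dots> = numer v 0 ^ 2"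
    unfolding D h by (simp add: numer_def power_mult_distrib)
  finally show "(numer v (1/x) * numer v x * row_gf (x + 1/x) v) ^ 2 = numer v 0 ^ 2" .
qed simp_all

section \<open>Solving the recurrence\<close>

definition numer_poly :: "complex \<Rightarrow> nat \<Rightarrow> complex poly" where
  "numer_poly v a = (SOME p. degree p \<le> a \<and> (\<lambda>z. numer v z $ a) = poly p)"

lemma numer_poly: "degree (numer_poly v a) \<le> a \<and> (\<lambda>z. numer v z $ a) = poly (numer_poly v a)"
proof -
  have "\<exists>p. degree p \<le> a \<and> (\<lambda>z. numer v z $ a) = poly p"
    using poly_coeffs_numer[of v] unfolding poly_coeffs_def poly_deg_le_def by blast
  then show ?thesis
    unfolding numer_poly_def by (rule someI_ex)
qed

lemma numer_nth: "numer v z $ a = (\<Sum>k\<le>a. coeff (numer_poly v a) k * z ^ k)"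
proof -
  have "numer v z $ a = poly (numer_poly v a) z"
    using numer_poly[of v a] by (simp add: fun_eq_iff)
  also have "\<dots> = (\<Sum>k\<le>a. coeff (numer_poly v a) k * z ^ k)"
    unfolding poly_altdef
    by (rule sum_eq_on_common_support) (use numer_poly[of v a] in \<open>auto intro: le_degree\<close>)
  finally show ?thesis .
qed

lemma numer_nth_inverse:
  "x \<noteq> 0 \<Longrightarrow> numer v (1/x) $ a = (\<Sum>k\<le>a. coeff (numer_poly v a) k * x powi (- int k))"
  unfolding numer_nth by (simp add: power_int_minus power_one_over divide_inverse power_inverse)

text \<open>The coefficient of \<open>t\<^sup>n x\<^sup>i y\<^sup>j\<close> in \<open>numer v (1/x) / (1 - t (x + 1/x + v (y + 1/y)))\<close>:
  the numerator contributes \<open>t\<^sup>a x\<^sup>-\<^sup>k\<close>, a free walk of length \<open>n - a\<close> the rest.\<close>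
definition rhs_coeff :: "complex \<Rightarrow> nat \<Rightarrow> int \<times> int \<Rightarrow> complex" where
  "rhs_coeff v n q =
     (\<Sum>a\<le>n. \<Sum>k\<le>a. coeff (numer_poly v a) k * free_walks v (n - a) (fst q + int k, snd q))"

lemma rhs_coeff_eq_0:
  assumes "\<bar>i\<bar> > int n \<or> \<bar>j\<bar> > int n"
  shows "rhs_coeff v n (i, j) = 0"
  unfolding rhs_coeff_def
proof (intro sum.neutral ballI)
  fix a k assume "a \<in> {..n}" "k \<in> {..a}"
  then have "\<bar>i + int k\<bar> > int (n - a) \<or> \<bar>j\<bar> > int (n - a)"
    using assms by auto
  then show "coeff (numer_poly v a) k * free_walks v (n - a) (fst (i, j) + int k, snd (i, j)) = 0"
    by (simp add: free_walks_eq_0)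
qed

lemma rhs_coeff_0: "rhs_coeff v 0 q = (if q = (0, 0) then 1 else 0)"
proof -
  have "coeff (numer_poly v 0) 0 = 1"
    using numer_nth[of v 0 0] by simp
  then show ?thesis
    by (cases q) (simp add: rhs_coeff_def free_walks_0)
qed

lemma rhs_coeff_Suc:
  assumes "(i, j) \<notin> slit"
  shows "rhs_coeff v (Suc n) (i, j) =
    rhs_coeff v n (i - 1, j) + rhs_coeff v n (i + 1, j) +
    v * rhs_coeff v n (i, j - 1) + v * rhs_coeff v n (i, j + 1)"
proof -
  have "free_walks v 0 (i + int k, j) = 0" for k
    using assms by (auto simp: free_walks_0 slit_def)
  then have "rhs_coeff v (Suc n) (i, j) =
      (\<Sum>a\<le>n. \<Sum>k\<le>a. coeff (numer_poly v a) k * free_walks v (Suc n - a) (i + int k, j))"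
    by (simp add: rhs_coeff_def)
  also have "\<dots> = (\<Sum>a\<le>n. \<Sum>k\<le>a. coeff (numer_poly v a) k *
      (free_walks v (n - a) (i + int k - 1, j) + free_walks v (n - a) (i + int k + 1, j) +
       v * free_walks v (n - a) (i + int k, j - 1) + v * free_walks v (n - a) (i + int k, j + 1)))"
    by (intro sum.cong refl) (simp add: Suc_diff_le free_walks_Suc)
  also have "\<dots> = rhs_coeff v n (i - 1, j) + rhs_coeff v n (i + 1, j) +
      v * rhs_coeff v n (i, j - 1) + v * rhs_coeff v n (i, j + 1)"
    unfolding rhs_coeff_def by (simp add: sum.distrib sum_distrib_left algebra_simps)
  finally show ?thesis .
qed

lemma rhs_coeff_sum:
  assumes "x \<noteq> 0"
    and free: "\<And>m k. m + k \<le> n \<Longrightarrow>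
      (\<Sum>q\<in>B. free_walks v m (fst q + int k, snd q) * w q) = x powi (- int k) * R $ m"
  shows "(\<Sum>q\<in>B. rhs_coeff v n q * w q) = (numer v (1/x) * R) $ n"
proof -
  have "(\<Sum>q\<in>B. rhs_coeff v n q * w q) =
      (\<Sum>a\<le>n. \<Sum>k\<le>a. coeff (numer_poly v a) k *
        (\<Sum>q\<in>B. free_walks v (n - a) (fst q + int k, snd q) * w q))"
    unfolding rhs_coeff_def
    by (simp add: sum_distrib_left sum_distrib_right sum.swap[of _ B] mult_ac)
  also have "\<dots> = (\<Sum>a\<le>n. \<Sum>k\<le>a. coeff (numer_poly v a) k * (x powi (- int k) * R $ (n - a)))"
    by (intro sum.cong refl) (simp add: free)
  also have "\<dots> = (\<Sum>a\<le>n. numer v (1/x) $ a * R $ (n - a))"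
    by (simp add: numer_nth_inverse[OF assms(1)] sum_distrib_left sum_distrib_right mult_ac)
  also have "\<dots> = (numer v (1/x) * R) $ n"
    by (simp add: fps_mult_nth atLeast0AtMost)
  finally show ?thesis .
qed

lemma rhs_coeff_row:
  assumes "x \<noteq> 0"
  shows "(\<Sum>i\<in>{-int n..int n}. rhs_coeff v n (i, 0) * x powi i) =
    (numer v (1/x) * row_gf (x + 1/x) v) $ n"
proof -
  have "(\<Sum>q\<in>{-int n..int n} \<times> {0}. rhs_coeff v n q * x powi fst q) =
      (numer v (1/x) * row_gf (x + 1/x) v) $ n"
  proof (rule rhs_coeff_sum[OF assms])
    fix m k assume "m + k \<le> n"
    then show "(\<Sum>q\<in>{-int n..int n} \<times> {0}. free_walks v m (fst q + int k, snd q) * x powi fst q) =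
        x powi (- int k) * row_gf (x + 1/x) v $ m"
      by (simp add: sum.cartesian_product' free_walks_laurent_shift free_walks_row_laurent assms)
  qed
  then show ?thesis
    by (simp add: sum.cartesian_product')
qed

lemma rhs_coeff_laurent:
  assumes "x \<noteq> 0" "y \<noteq> 0"
  shows "(\<Sum>q\<in>{-int n..int n} \<times> {-int n..int n}. rhs_coeff v n q * (x powi fst q * y powi snd q)) =
    (numer v (1/x) * inverse (1 - fps_const (x + 1/x + v * (y + 1/y)) * fps_X)) $ n"
proof (rule rhs_coeff_sum[OF assms(1)])
  fix m k assume mk: "m + k \<le> n"
  let ?K = "x + 1/x + v * (y + 1/y)" and ?I = "{-int n..int n}"
  have "(\<Sum>q\<in>?I \<times> ?I. free_walks v m (fst q + int k, snd q) * (x powi fst q * y powi snd q)) =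
      (\<Sum>j\<in>?I. \<Sum>i\<in>?I. y powi j * (free_walks v m (i + int k, j) * x powi i))"
    unfolding sum.cartesian_product' by (subst sum.swap) (simp add: mult_ac)
  also have "\<dots> = (\<Sum>j\<in>?I. y powi j * (x powi (- int k) *
      (\<Sum>i\<in>{-int m..int m}. free_walks v m (i, j) * x powi i)))"
    by (intro sum.cong refl) (simp add: free_walks_laurent_shift assms mk flip: sum_distrib_left)
  also have "\<dots> = x powi (- int k) *
      (\<Sum>q\<in>{-int m..int m} \<times> ?I. free_walks v m q * (x powi fst q * y powi snd q))"
    unfolding sum.cartesian_product' sum_distrib_left
    by (subst (2) sum.swap) (simp add: mult_ac)
  also have "\<dots> = x powi (- int k) * ?K ^ m"
    using mk by (simp add: free_walks_laurent assms)
  also have "?K ^ m = inverse (1 - fps_const ?K * fps_X) $ m"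
    using inverse_one_minus_const_X_power_nth[of ?K 0 m] by simp
  finally show "(\<Sum>q\<in>?I \<times> ?I. free_walks v m (fst q + int k, snd q) * (x powi fst q * y powi snd q)) =
      x powi (- int k) * inverse (1 - fps_const ?K * fps_X) $ m" .
qed

lemma row_gf_numer_quotient:
  assumes "x \<noteq> 0"
  shows "numer v (1/x) * row_gf (x + 1/x) v = numer v 0 * inverse (numer v x)"
proof -
  have "numer v (1/x) * row_gf (x + 1/x) v =
      (numer v (1/x) * numer v x * row_gf (x + 1/x) v) * inverse (numer v x)"
    by (simp add: inverse_mult_eq_1' mult_ac)
  then show ?thesis
    by (simp only: numer_kernel_identity[OF assms])
qed

text \<open>By \<open>numer_kernel_identity\<close> the row generating function of \<open>rhs_coeff\<close> is
  \<open>numer v 0 / numer v x\<close>, whose coefficients are polynomials in \<open>x\<close> without constant term.\<close>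
lemma rhs_coeff_slit:
  assumes "1 \<le> n" "i \<le> 0"
  shows "rhs_coeff v n (i, 0) = 0"
proof -
  have "poly_coeffs (\<lambda>x. inverse (numer v x))"
    by (rule poly_coeffs_inverse[OF poly_coeffs_numer numer_nth_0]) simp
  then have "poly_coeffs (\<lambda>x. numer v 0 * inverse (numer v x))"
    by (intro poly_coeffs_mult poly_coeffs_const)
  then obtain p where p: "degree p \<le> n" "(\<lambda>x. (numer v 0 * inverse (numer v x)) $ n) = poly p"
    unfolding poly_coeffs_def poly_deg_le_def by blast
  have "coeff p 0 = (numer v 0 * inverse (numer v 0)) $ n"
    using fun_cong[OF p(2), of 0] by (simp add: poly_0_coeff_0)
  also have "\<dots> = 0"
    using assms(1) by (simp add: inverse_mult_eq_1')
  finally have p0: "coeff p 0 = 0" .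
  define e where "e i = (if 0 \<le> i then coeff p (nat i) else 0)" for i
  have laurent: "(\<Sum>i\<in>{-int n..int n}. (rhs_coeff v n (i, 0) - e i) * x powi i) = 0" if "x \<noteq> 0" for x
    using rhs_coeff_row[OF that] row_gf_numer_quotient[OF that] laurent_sum_poly[OF p(1), of x]
      fun_cong[OF p(2), of x]
    by (simp add: e_def left_diff_distrib sum_subtractf)
  show ?thesis
  proof (cases "i < - int n")
    case True
    then show ?thesis
      using rhs_coeff_eq_0[of n i 0 v] by simp
  next
    case False
    then have "rhs_coeff v n (i, 0) - e i = 0"
      using assms(2) by (intro laurent_coeffs_eq_0[where N=n, OF laurent]) auto
    moreover have "e i = 0"
      using assms(2) p0 by (auto simp: e_def)
    ultimately show ?thesis
      by simp
  qed
qed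

lemma slit_count_eq_rhs_coeff: "slit_count v n q = rhs_coeff v n q"
proof (induction n arbitrary: q)
  case 0
  then show ?case
    by (simp add: slit_count_0 rhs_coeff_0)
next
  case (Suc n)
  obtain i j where q: "q = (i, j)"
    by (cases q)
  show ?case
  proof (cases "(i, j) \<in> slit")
    case True
    then show ?thesis
      using q rhs_coeff_slit[of "Suc n" i v] by (auto simp: slit_count_Suc slit_def)
  next
    case False
    then show ?thesis
      using q Suc.IH rhs_coeff_Suc[OF False] by (simp add: slit_count_Suc)
  qed
qed

lemma S_gf_eq_numer_div_kernel:
  assumes "x \<noteq> 0" "y \<noteq> 0"
  shows "S_gf x y v = numer v (1/x) * inverse (1 - fps_const (x + 1/x + v * (y + 1/y)) * fps_X)"
  by (rule fps_ext) (simp only: S_gf_nth slit_count_eq_rhs_coeff rhs_coeff_laurent[OF assms])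

theorem mainTheorem6:
  fixes x y v :: complex
  assumes "x \<noteq> 0" and "y \<noteq> 0"
  defines "t \<equiv> (fps_X :: complex fps)"
  defines "\<delta>1 \<equiv> (1 - 2 * t * fps_const (1 + v)) * (1 + 2 * t * fps_const (1 - v))"
  defines "\<delta>2 \<equiv> (1 - 2 * t * fps_const (1 - v)) * (1 + 2 * t * fps_const (1 + v))"
  shows "S_gf x y v =
    fps_sqrt (1 - 2 * t * fps_const (v + 1 / x) + fps_sqrt \<delta>1) *
    fps_sqrt (1 + 2 * t * fps_const (v - 1 / x) + fps_sqrt \<delta>2) /
    (2 * (1 - t * fps_const (x + 1 / x + y * v + (1 / y) * v)))"
proof -
  have "fps_sqrt (1 - 2 * t * fps_const (v + 1 / x) + fps_sqrt \<delta>1) = sqrt_factor v (1/x)"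
    by (simp add: sqrt_factor_def delta_def t_def \<delta>1_def)
  moreover have "fps_sqrt (1 + 2 * t * fps_const (v - 1 / x) + fps_sqrt \<delta>2) = sqrt_factor (-v) (1/x)"
    by (simp add: sqrt_factor_uminus t_def \<delta>2_def)
  moreover have "2 * (1 - t * fps_const (x + 1 / x + y * v + (1 / y) * v)) =
      fps_const 2 * (1 - fps_const (x + 1/x + v * (y + 1/y)) * fps_X)"
    by (simp add: t_def numeral_fps_const algebra_simps)
  ultimately show ?thesis
    using S_gf_eq_numer_div_kernel[OF assms(1,2)]
    by (simp add: numer_def fps_divide_unit fps_inverse_mult fps_const_inverse mult_ac)
qed

end
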